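(* Let $\mathcal{Z}=(L,\prec)$ where $L\subseteq\{0,1,2,3\}^*$ is the regular language $\{\varepsilon\}\cup 2(0+2)^*\cup 2(0+2)^*(1+3)0^*\cup 30^*\cup 10^*$ and $\prec$ is the radix order on $L$ (shorter words first, words of equal length ordered lexicographically with $0\prec1\prec2\prec3$). Then $\mathcal{Z}$ is not addable, i.e. the set $\{(x,y,x+y):x,y\in\mathbb{N}\}$ is not $\mathcal{Z}$-recognizable.
   Context: For an ANS $(L,\prec)$, $\mathrm{rep}(n)$ is the $n$-th word of $L$ in the order $\prec$ (with $\mathrm{rep}(0)=\varepsilon$ here) and $\mathrm{val}=\mathrm{rep}^{-1}$. A triple $(n_1,n_2,n_3)$ is represented by left-padding $\mathrm{rep}(n_1),\mathrm{rep}(n_2),\mathrm{rep}(n_3)$ with a new symbol $\#$ to a common length and reading them in parallel as a word over $(\{0,1,2,3\}\cup\{\#\})^3$; a set of triples is $\mathcal{Z}$-recognizable if the set of its representations is a regular language. (This ANS is the Dumont–Thomas numeration system of the substitution $a\mapsto abab$, $b\mapsto b$.) *)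

theory Defs
  imports Main
begin

definition L :: "nat list set" where
  "L = {[]}
     \<union> {2 # u | u. set u \<subseteq> {0, 2}}
     \<union> {2 # u @ [d] @ replicate k 0 | u d k. set u \<subseteq> {0, 2} \<and> d \<in> {1, 3}}
     \<union> {3 # replicate k 0 | k. True}
     \<union> {1 # replicate k 0 | k. True}"

definition radix_less :: "nat list \<Rightarrow> nat list \<Rightarrow> bool" where
  "radix_less u v \<longleftrightarrow> length u < length v \<or>
     (length u = length v \<and> (u, v) \<in> lexord {(a, b). a < b})"

definition rep :: "nat \<Rightarrow> nat list" where
  "rep n = (THE w. w \<in> L \<and> card {v \<in> L. radix_less v w} = n)"

text \<open>Left padding with the new symbol # (encoded as None) to length k.\<close>
definition pad :: "nat \<Rightarrow> nat list \<Rightarrow> nat option list" where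
  "pad k w = replicate (k - length w) None @ map Some w"

definition rep3 :: "nat \<Rightarrow> nat \<Rightarrow> nat \<Rightarrow> (nat option \<times> nat option \<times> nat option) list" where
  "rep3 n1 n2 n3 =
     (let k = max (length (rep n1)) (max (length (rep n2)) (length (rep n3)))
      in zip (pad k (rep n1)) (zip (pad k (rep n2)) (pad k (rep n3))))"

definition Sigma3 :: "(nat option \<times> nat option \<times> nat option) set" where
  "Sigma3 = (let D = {None, Some 0, Some 1, Some 2, Some 3} in D \<times> D \<times> D)"

definition regular_over :: "'a set \<Rightarrow> 'a list set \<Rightarrow> bool" where
  "regular_over \<Sigma> A \<longleftrightarrow> A \<subseteq> lists \<Sigma> \<and>
     (\<exists>(Q :: nat set) q0 \<delta> F. finite Q \<and> q0 \<in> Q \<and> (\<forall>q\<in>Q. \<forall>a\<in>\<Sigma>. \<delta> q a \<in> Q) \<and> F \<subseteq> Q \<and>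
        A = {w \<in> lists \<Sigma>. fold (\<lambda>a q. \<delta> q a) w q0 \<in> F})"

definition Z_recognizable :: "(nat \<times> nat \<times> nat) set \<Rightarrow> bool" where
  "Z_recognizable X \<longleftrightarrow> regular_over Sigma3 {rep3 n1 n2 n3 | n1 n2 n3. (n1, n2, n3) \<in> X}"

end

theory Submission
  imports Defs
begin

text \<open>Write \<open>s(n)\<close> for the number of words of \<open>L\<close> of length at most \<open>n\<close>, so that
  \<open>s(n) \<ge> 2n + 1\<close>. The ranks of three families of words are read off from \<open>s\<close>:
  \<open>val(1 0^j) = s(j)\<close>, \<open>val(3 0^(K-1)) = s(K) - 1\<close>, and \<open>val(2^K) = s(K) - K - 1\<close>,
  because the only words of length \<open>K\<close> above \<open>2^K\<close> are the \<open>K\<close> words \<open>2^i 3 0^*\<close>.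
  Hence, for \<open>K = m + j + 2\<close>, the padded triple \<open>(2^K, 1 0^j, 3 0^(K-1))\<close>, read as
  \<open>(2,#,3) (2,#,0)^m (2,1,0) (2,0,0)^j\<close>, encodes an addition iff \<open>s(j) = m + j + 2\<close>.
  For each \<open>j\<close> exactly one \<open>m\<close> qualifies, so the prefixes \<open>(2,#,3) (2,#,0)^i\<close> are
  pairwise distinguishable, which is impossible for a finite automaton.\<close>

lemma radix_less_iff_lexordp:
  "radix_less u v \<longleftrightarrow> length u < length v \<or> (length u = length v \<and> ord_class.lexordp u v)"
  unfolding radix_less_def lexordp_conv_lexord by simp

lemma radix_less_irrefl: "\<not> radix_less w w"
  by (simp add: radix_less_iff_lexordp lexordp_irreflexive')

lemma radix_less_trans: "radix_less u v \<Longrightarrow> radix_less v w \<Longrightarrow> radix_less u w"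
  unfolding radix_less_iff_lexordp using lexordp_trans by fastforce

lemma radix_less_linear: "u \<noteq> v \<Longrightarrow> radix_less u v \<or> radix_less v u"
  unfolding radix_less_iff_lexordp using lexordp_linear by (metis linorder_neqE_nat)

lemma lexordp_asym: "ord_class.lexordp (u :: 'a :: linorder list) v \<Longrightarrow> \<not> ord_class.lexordp v u"
  using lexordp_trans lexordp_irreflexive' by blast

section \<open>Ranks of words of \<open>L\<close>\<close>

definition L_upto :: "nat \<Rightarrow> nat list set" where
  "L_upto n = {v \<in> L. length v \<le> n}"

definition L_count :: "nat \<Rightarrow> nat" where
  "L_count n = card (L_upto n)"

definition val :: "nat list \<Rightarrow> nat" where
  "val w = card {v \<in> L. radix_less v w}"

lemma L_cases [consumes 1, case_names empty two_word two_word_digit three_zeros one_zeros]: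
  assumes "v \<in> L"
  obtains "v = []"
  | u where "set u \<subseteq> {0, 2}" "v = 2 # u"
  | u d k where "set u \<subseteq> {0, 2}" "d \<in> {1, 3}" "v = 2 # u @ d # replicate k 0"
  | k where "v = 3 # replicate k 0"
  | k where "v = 1 # replicate k 0"
  using assms unfolding L_def by auto

lemma L_digits: "w \<in> L \<Longrightarrow> set w \<subseteq> {0, 1, 2, 3}"
  unfolding L_def by auto

lemma twos_in_L: "replicate (Suc n) 2 \<in> L"
proof -
  have "set (replicate n (2::nat)) \<subseteq> {0, 2}" by (simp add: set_replicate_conv_if)
  then show ?thesis unfolding L_def by auto
qed

lemma finite_L_upto: "finite (L_upto n)"
proof (rule finite_subset)
  show "L_upto n \<subseteq> {xs. set xs \<subseteq> {0, 1, 2, 3} \<and> length xs \<le> n}"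
    using L_digits unfolding L_upto_def by auto
  show "finite {xs. set xs \<subseteq> {0::nat, 1, 2, 3} \<and> length xs \<le> n}"
    by (rule finite_lists_length_le) simp
qed

lemma radix_predecessors_eq:
  assumes "w \<in> L"
  shows "{v \<in> L. radix_less v w}
    = L_upto (length w) - {v \<in> L. length v = length w \<and> \<not> ord_class.lexordp v w}"
  unfolding L_upto_def radix_less_iff_lexordp by auto

lemma val_eq_L_count_diff:
  assumes "w \<in> L"
  shows "val w
    = L_count (length w) - card {v \<in> L. length v = length w \<and> \<not> ord_class.lexordp v w}"
proof -
  have "{v \<in> L. length v = length w \<and> \<not> ord_class.lexordp v w} \<subseteq> L_upto (length w)"
    unfolding L_upto_def by auto
  then show ?thesis
    unfolding val_def L_count_def radix_predecessors_eq[OF assms]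
    by (meson card_Diff_subset finite_L_upto finite_subset)
qed

lemma finite_radix_predecessors: "w \<in> L \<Longrightarrow> finite {v \<in> L. radix_less v w}"
  using radix_predecessors_eq finite_L_upto by simp

lemma val_less_L_count:
  assumes "w \<in> L" and "length w \<le> n"
  shows "val w < L_count n"
proof -
  have "{v \<in> L. radix_less v w} \<subseteq> L_upto n - {w}"
    using assms radix_less_irrefl unfolding L_upto_def radix_less_iff_lexordp by auto
  moreover have "w \<in> L_upto n" using assms unfolding L_upto_def by auto
  ultimately show ?thesis
    unfolding val_def L_count_def using finite_L_upto
    by (metis card_Diff1_less card_mono finite_Diff order_le_less_trans)
qed

lemma val_strict_mono:
  assumes "u \<in> L" and "w \<in> L" and "radix_less u w"
  shows "val u < val w"
proof -
  have "{v \<in> L. radix_less v u} \<subset> {v \<in> L. radix_less v w}"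
    using assms radix_less_trans radix_less_irrefl by blast
  then show ?thesis
    unfolding val_def using finite_radix_predecessors[OF assms(2)] by (rule psubset_card_mono[rotated])
qed

lemma inj_on_val: "inj_on val L"
  unfolding inj_on_def by (metis radix_less_linear val_strict_mono less_irrefl)

lemma L_count_lower_bound: "2 * n + 1 \<le> L_count n"
proof (induction n)
  case 0
  have "[] \<in> L_upto 0" unfolding L_upto_def L_def by auto
  then show ?case
    unfolding L_count_def using card_gt_0_iff[of "L_upto 0"] finite_L_upto by auto
next
  case (Suc n)
  let ?a = "1 # replicate n (0::nat)" and ?b = "3 # replicate n (0::nat)"
  have "?a \<in> L" "?b \<in> L" unfolding L_def by blast+
  then have "insert ?a (insert ?b (L_upto n)) \<subseteq> L_upto (Suc n)"
    unfolding L_upto_def by auto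
  moreover have "card (insert ?a (insert ?b (L_upto n))) = L_count n + 2"
  proof -
    have "?a \<notin> L_upto n" "?b \<notin> L_upto n" unfolding L_upto_def by auto
    then show ?thesis unfolding L_count_def using finite_L_upto by simp
  qed
  ultimately have "L_count n + 2 \<le> L_count (Suc n)"
    unfolding L_count_def by (metis card_mono finite_L_upto)
  then show ?case using Suc by simp
qed

lemma val_surj: "\<exists>w\<in>L. val w = n"
proof -
  have "inj_on val (L_upto n)"
    using inj_on_val unfolding L_upto_def by (rule inj_on_subset) auto
  then have "card (val ` L_upto n) = L_count n" unfolding L_count_def by (rule card_image)
  moreover have "val ` L_upto n \<subseteq> {..<L_count n}"
    using val_less_L_count unfolding L_upto_def by auto
  ultimately have "val ` L_upto n = {..<L_count n}" by (intro card_subset_eq) auto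
  moreover have "n < L_count n" using L_count_lower_bound[of n] by simp
  ultimately have "n \<in> val ` L_upto n" by simp
  then show ?thesis unfolding L_upto_def by auto
qed

lemma rep_val: "w \<in> L \<Longrightarrow> rep (val w) = w"
  unfolding rep_def val_def
  by (rule the_equality) (use inj_on_val in \<open>auto simp: inj_on_def val_def\<close>)

lemma val_rep: "val (rep n) = n"
  using val_surj rep_val by metis

lemma rep_inj: "rep a = rep b \<Longrightarrow> a = b"
  using val_rep by metis

section \<open>Three explicit ranks\<close>

lemma val_one_zeros: "val (1 # replicate j 0) = L_count j"
proof -
  have "\<not> ord_class.lexordp v (1 # replicate j 0)" if v: "v \<in> L" "length v = Suc j" for v
  proof
    assume "ord_class.lexordp v (1 # replicate j 0)"
    then consider x vs where "1 # replicate j 0 = v @ x # vs"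
      | us a b vs ws where "a < b" "v = us @ a # vs" "1 # replicate j 0 = us @ b # ws"
      unfolding lexordp_iff by blast
    then show False
    proof cases
      case 1
      then have "length (1 # replicate j (0::nat)) = length (v @ x # vs)" by (rule arg_cong)
      then show ?thesis using v(2) by simp
    next
      case (2 us a b vs ws)
      show ?thesis
      proof (cases us)
        case Nil
        then have "v = 0 # vs" using 2 by simp
        with v(1) show ?thesis by (cases rule: L_cases) auto
      next
        case (Cons c us')
        then have "replicate j 0 = us' @ b # ws" using 2(3) by simp
        then have "b = 0" by (metis in_set_conv_decomp in_set_replicate)
        then show ?thesis using 2(1) by simp
      qed
    qed
  qed
  then have "{v \<in> L. radix_less v (1 # replicate j 0)} = L_upto j"
    unfolding L_upto_def radix_less_iff_lexordp by fastforce
  then show ?thesis unfolding val_def L_count_def by simp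
qed

lemma val_three_zeros: "val (3 # replicate k 0) = L_count (Suc k) - 1"
proof -
  let ?w = "3 # replicate k (0::nat)"
  have "ord_class.lexordp v ?w" if v: "v \<in> L" "length v = Suc k" "v \<noteq> ?w" for v
  proof (rule ccontr)
    assume "\<not> ord_class.lexordp v ?w"
    then have "ord_class.lexordp ?w v" using v(3) lexordp_linear by blast
    then consider x vs where "v = ?w @ x # vs"
      | us a b vs ws where "a < b" "?w = us @ a # vs" "v = us @ b # ws"
      unfolding lexordp_iff by blast
    then show False
    proof cases
      case 1
      then show ?thesis using v by simp
    next
      case (2 us a b vs ws)
      have "b \<le> 3" using L_digits[OF v(1)] 2(3) by auto
      show ?thesis
      proof (cases us)
        case Nil
        then show ?thesis using 2 \<open>b \<le> 3\<close> by auto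
      next
        case (Cons c us')
        then have "v \<noteq> []" "hd v = 3" using 2 by simp_all
        with v(1) obtain k' where "v = 3 # replicate k' 0" by (cases rule: L_cases) auto
        then have "us' @ b # ws = replicate k' 0" using 2 Cons by simp
        then have "b \<in> set (replicate k' (0::nat))" by (metis in_set_conv_decomp)
        then show ?thesis using 2 by auto
      qed
    qed
  qed
  moreover have "?w \<in> L" unfolding L_def by blast
  ultimately have "{v \<in> L. length v = Suc k \<and> \<not> ord_class.lexordp v ?w} = {?w}"
    using lexordp_irreflexive' by auto
  then show ?thesis using val_eq_L_count_diff[OF \<open>?w \<in> L\<close>] by simp
qed

definition twos_three_zeros :: "nat \<Rightarrow> nat \<Rightarrow> nat list" where
  "twos_three_zeros K i = replicate i 2 @ 3 # replicate (K - 1 - i) 0"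

lemma twos_three_zeros_in_L: "twos_three_zeros K i \<in> L"
proof (cases i)
  case 0
  then show ?thesis unfolding twos_three_zeros_def L_def by auto
next
  case (Suc i')
  have "set (replicate i' (2::nat)) \<subseteq> {0, 2}" by (simp add: set_replicate_conv_if)
  then have "2 # replicate i' 2 @ [3] @ replicate (K - 1 - i) 0 \<in> L"
    unfolding L_def by blast
  then show ?thesis unfolding twos_three_zeros_def Suc by simp
qed

lemma inj_on_twos_three_zeros: "inj_on (twos_three_zeros K) {..<K}"
proof
  fix i i' assume "twos_three_zeros K i = twos_three_zeros K i'"
  then have "replicate i (2::nat) = replicate i' 2"
    unfolding twos_three_zeros_def by (subst (asm) append_Cons_eq_iff) auto
  then show "i = i'" by (metis length_replicate)
qed

lemma L_zeros_after_three:
  assumes "v \<in> L" and "3 \<notin> set u" and "v = u @ 3 # ws"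
  shows "ws = replicate (length ws) 0"
proof -
  have "3 \<in> set v" using assms(3) by simp
  obtain xs k where "v = xs @ 3 # replicate k 0" "3 \<notin> set xs"
    using assms(1)
  proof (cases rule: L_cases)
    case (two_word_digit u d k)
    with \<open>3 \<in> set v\<close> have "d = 3" by auto
    moreover have "3 \<notin> set u" using two_word_digit(1) by auto
    ultimately show ?thesis using two_word_digit(3) that[of "2 # u" k] by simp
  next
    case (three_zeros k)
    with that[of "[]" k] show ?thesis by simp
  qed (use \<open>3 \<in> set v\<close> in auto)
  then show ?thesis
    using assms(2,3) append_Cons_eq_iff[of 3 xs "replicate k 0" u ws] by auto
qed

lemma lexordp_twos_iff:
  assumes v: "v \<in> L" "length v = K"
  shows "ord_class.lexordp (replicate K 2) v \<longleftrightarrow> (\<exists>i<K. v = twos_three_zeros K i)"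
proof
  assume "ord_class.lexordp (replicate K 2) v"
  then consider x vs where "v = replicate K 2 @ x # vs"
    | us a b vs ws where "a < b" "replicate K 2 = us @ a # vs" "v = us @ b # ws"
    unfolding lexordp_iff by blast
  then show "\<exists>i<K. v = twos_three_zeros K i"
  proof cases
    case 1
    then show ?thesis using v by simp
  next
    case (2 us a b vs ws)
    have "a = 2" using 2(2) by (metis in_set_conv_decomp in_set_replicate)
    moreover have "b \<le> 3" using L_digits[OF v(1)] 2(3) by auto
    ultimately have "b = 3" using 2(1) by simp
    have "set us \<subseteq> set (replicate K (2::nat))" using 2(2) by (metis Un_upper1 set_append)
    then have "\<forall>y\<in>set us. y = 2" by auto
    then have "us = replicate (length us) 2" by (metis replicate_length_same)
    then have v_split: "v = replicate (length us) 2 @ 3 # ws" using 2(3) \<open>b = 3\<close> by metis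
    then have "ws = replicate (length ws) 0"
      using L_zeros_after_three[OF v(1), of "replicate (length us) 2" ws] by simp
    moreover have "length ws = K - 1 - length us" "length us < K" using v(2) v_split by simp_all
    ultimately show ?thesis
      using v_split unfolding twos_three_zeros_def by metis
  qed
next
  assume "\<exists>i<K. v = twos_three_zeros K i"
  then obtain i where i: "i < K" "v = twos_three_zeros K i" by blast
  have "K = i + Suc (K - 1 - i)" using i(1) by simp
  then have "replicate K (2::nat) = replicate i 2 @ 2 # replicate (K - 1 - i) 2"
    by (metis replicate_Suc replicate_add)
  then show "ord_class.lexordp (replicate K 2) v"
    using i(2) unfolding twos_three_zeros_def by (simp add: lexordp_append_left_rightI)
qed

lemma val_twos: "val (replicate (Suc k) 2) = L_count (Suc k) - Suc (Suc k)"
proof -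
  let ?K = "Suc k"
  let ?w = "replicate ?K (2::nat)"
  have not_below_iff: "\<not> ord_class.lexordp v ?w \<longleftrightarrow> v = ?w \<or> ord_class.lexordp ?w v" for v
    using lexordp_linear lexordp_asym lexordp_irreflexive' by metis
  have "{v \<in> L. length v = ?K \<and> \<not> ord_class.lexordp v ?w}
      = insert ?w (twos_three_zeros ?K ` {..<?K})" (is "?A = ?B")
  proof
    show "?A \<subseteq> ?B"
    proof
      fix v assume "v \<in> ?A"
      then have "v = ?w \<or> (\<exists>i<?K. v = twos_three_zeros ?K i)"
        using not_below_iff[of v] lexordp_twos_iff[of v ?K] by auto
      then show "v \<in> ?B" by blast
    qed
    show "?B \<subseteq> ?A"
    proof
      fix v assume "v \<in> ?B"
      then consider "v = ?w" | i where "i < ?K" "v = twos_three_zeros ?K i" by blast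
      then show "v \<in> ?A"
      proof cases
        case 1
        then show ?thesis using twos_in_L[of k] lexordp_irreflexive' by auto
      next
        case 2
        then have "length v = ?K" unfolding twos_three_zeros_def by simp
        then show ?thesis
          using 2 lexordp_twos_iff lexordp_asym twos_three_zeros_in_L by blast
      qed
    qed
  qed
  moreover have "?w \<notin> twos_three_zeros ?K ` {..<?K}"
  proof
    assume "?w \<in> twos_three_zeros ?K ` {..<?K}"
    then obtain i where "?w = twos_three_zeros ?K i" by blast
    moreover have "3 \<in> set (twos_three_zeros ?K i)" unfolding twos_three_zeros_def by simp
    ultimately show False by (metis in_set_replicate numeral_eq_iff semiring_norm(89))
  qed
  ultimately have "card {v \<in> L. length v = ?K \<and> \<not> ord_class.lexordp v ?w} = Suc ?K"
    using card_image[OF inj_on_twos_three_zeros] by simp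
  then show ?thesis using val_eq_L_count_diff[OF twos_in_L, of k] by simp
qed

lemma pad_length: "length w \<le> k \<Longrightarrow> length (pad k w) = k"
  unfolding pad_def by simp

lemma pad_inj: "pad a u = pad b v \<Longrightarrow> u = v"
proof -
  have "map the (filter (\<lambda>x. x \<noteq> None) (pad k w)) = w" for k w
    unfolding pad_def by (simp add: filter_map comp_def)
  then show "pad a u = pad b v \<Longrightarrow> u = v" by metis
qed

lemma zip_inj:
  assumes "length xs = length ys" and "length xs' = length ys'" and "zip xs ys = zip xs' ys'"
  shows "xs = xs' \<and> ys = ys'"
  using assms zip_eq_conv by metis

lemma rep3_inj:
  assumes "rep3 a b c = rep3 a' b' c'"
  shows "a = a' \<and> b = b' \<and> c = c'"
proof -
  define k where "k = max (length (rep a)) (max (length (rep b)) (length (rep c)))"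
  define k' where "k' = max (length (rep a')) (max (length (rep b')) (length (rep c')))"
  have "zip (pad k (rep a)) (zip (pad k (rep b)) (pad k (rep c)))
      = zip (pad k' (rep a')) (zip (pad k' (rep b')) (pad k' (rep c')))"
    using assms unfolding rep3_def k_def k'_def Let_def .
  moreover have "length (pad k (rep a)) = k" "length (pad k (rep b)) = k" "length (pad k (rep c)) = k"
    "length (pad k' (rep a')) = k'" "length (pad k' (rep b')) = k'" "length (pad k' (rep c')) = k'"
    unfolding k_def k'_def by (simp_all add: pad_length)
  ultimately have "pad k (rep a) = pad k' (rep a')" "pad k (rep b) = pad k' (rep b')"
    "pad k (rep c) = pad k' (rep c')"
    using zip_inj by (metis length_zip min.idem)+
  then show ?thesis using pad_inj rep_inj by blast
qed

type_synonym digit_triple = "nat option \<times> nat option \<times> nat option"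

definition addition_words :: "digit_triple list set" where
  "addition_words = {rep3 x y (x + y) | x y. True}"

lemma rep3_in_addition_words_iff: "rep3 a b c \<in> addition_words \<longleftrightarrow> a + b = c"
  unfolding addition_words_def using rep3_inj by blast

section \<open>Pairwise distinguishable prefixes\<close>

definition witness_prefix :: "nat \<Rightarrow> digit_triple list" where
  "witness_prefix i = (Some 2, None, Some 3) # replicate i (Some 2, None, Some 0)"

definition witness :: "nat \<Rightarrow> nat \<Rightarrow> digit_triple list" where
  "witness m j = witness_prefix m @ (Some 2, Some 1, Some 0) # replicate j (Some 2, Some 0, Some 0)"

lemma witness_eq_rep3:
  "witness m j = rep3 (val (replicate (m + j + 2) 2)) (val (1 # replicate j 0))
     (val (3 # replicate (m + j + 1) 0))"
proof -
  let ?K = "m + j + 2"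
  have "?K = Suc m + Suc j" "m + j + 1 = m + Suc j" by simp_all
  then have twos: "pad ?K (replicate ?K (2::nat))
      = (Some 2 # replicate m (Some 2)) @ Some 2 # replicate j (Some 2)"
    and one: "pad ?K (1 # replicate j (0::nat)) = (None # replicate m None) @ Some 1 # replicate j (Some 0)"
    and three: "pad ?K (3 # replicate (m + j + 1) (0::nat))
      = (Some 3 # replicate m (Some 0)) @ Some 0 # replicate j (Some 0)"
    unfolding pad_def by (simp_all only: replicate_add) (simp_all add: replicate_append_same)
  have in_L: "replicate (m + j + 2) (2::nat) \<in> L" "1 # replicate j (0::nat) \<in> L"
    "3 # replicate (m + j + 1) (0::nat) \<in> L"
    using twos_in_L[of "m + j + 1"] unfolding L_def by (simp, blast+)
  have "rep3 (val (replicate ?K 2)) (val (1 # replicate j 0)) (val (3 # replicate (m + j + 1) 0))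
      = zip (pad ?K (replicate ?K 2)) (zip (pad ?K (1 # replicate j 0))
          (pad ?K (3 # replicate (m + j + 1) 0)))"
    unfolding rep3_def rep_val[OF in_L(1)] rep_val[OF in_L(2)] rep_val[OF in_L(3)]
    by (simp add: Let_def max_def)
  also have "\<dots> = witness m j"
    unfolding twos one three witness_def witness_prefix_def by (simp add: zip_replicate)
  finally show ?thesis ..
qed

lemma witness_in_addition_words_iff: "witness m j \<in> addition_words \<longleftrightarrow> L_count j = m + j + 2"
proof -
  let ?K = "m + j + 2"
  define c where "c = L_count ?K - Suc ?K"
  have "L_count ?K = c + Suc ?K"
    using L_count_lower_bound[of ?K] unfolding c_def by simp
  then have "val (replicate ?K 2) = c" "val (3 # replicate (m + j + 1) 0) = c + ?K"
    using val_twos[of "m + j + 1"] val_three_zeros[of "m + j + 1"] by simp_all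
  then show ?thesis
    unfolding witness_eq_rep3 rep3_in_addition_words_iff val_one_zeros by simp
qed

lemma witness_letters_in_Sigma3:
  "(Some 2, None, Some 3) \<in> Sigma3" "(Some 2, None, Some 0) \<in> Sigma3"
  "(Some 2, Some 1, Some 0) \<in> Sigma3" "(Some 2, Some 0, Some 0) \<in> Sigma3"
  unfolding Sigma3_def Let_def by simp_all

lemma witness_prefix_in_lists: "witness_prefix i \<in> lists Sigma3"
  unfolding witness_prefix_def using witness_letters_in_Sigma3
  by (simp add: in_lists_conv_set set_replicate_conv_if)

text \<open>Taking \<open>j = i2 + 1\<close> makes the unique \<open>m\<close> with \<open>L_count j = m + j + 2\<close> at least \<open>i2\<close>,
  so both prefixes can be extended by the same suffix, only the first one to \<open>witness m j\<close>.\<close>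

lemma witness_prefixes_distinguishable:
  assumes "i1 < i2"
  shows "\<exists>s\<in>lists Sigma3.
    witness_prefix i1 @ s \<in> addition_words \<and> witness_prefix i2 @ s \<notin> addition_words"
proof -
  define j where "j = Suc i2"
  define m where "m = L_count j - j - 2"
  have m: "L_count j = m + j + 2" "i2 \<le> m"
    using L_count_lower_bound[of j] unfolding m_def j_def by simp_all
  define s :: "digit_triple list" where "s = replicate (m - i1) (Some 2, None, Some 0)
      @ (Some 2, Some 1, Some 0) # replicate j (Some 2, Some 0, Some 0)"
  have prefix_s: "witness_prefix i @ s = witness (i + (m - i1)) j" for i
    unfolding s_def witness_def witness_prefix_def by (simp add: replicate_add)
  show ?thesis
  proof (intro bexI conjI)
    show "witness_prefix i1 @ s \<in> addition_words"
      unfolding prefix_s witness_in_addition_words_iff using m assms by simp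
    show "witness_prefix i2 @ s \<notin> addition_words"
      unfolding prefix_s witness_in_addition_words_iff using m assms by simp
    show "s \<in> lists Sigma3"
      unfolding s_def using witness_letters_in_Sigma3
      by (simp add: in_lists_conv_set set_replicate_conv_if)
  qed
qed

section \<open>Finite automata\<close>

lemma fold_transition_closed:
  assumes "\<forall>q\<in>Q. \<forall>a\<in>\<Sigma>. \<delta> q a \<in> Q" and "q \<in> Q" and "w \<in> lists \<Sigma>"
  shows "fold (\<lambda>a q. \<delta> q a) w q \<in> Q"
  using assms(2,3) by (induction w arbitrary: q) (use assms(1) in auto)

lemma regular_over_indistinguishable_prefixes:
  assumes "regular_over \<Sigma> A" and "\<forall>i. p i \<in> lists \<Sigma>"
  obtains i1 i2 :: nat where "i1 < i2" "\<forall>s\<in>lists \<Sigma>. p i1 @ s \<in> A \<longleftrightarrow> p i2 @ s \<in> A"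
proof -
  obtain Q :: "nat set" and q0 \<delta> F
    where Q: "finite Q" "q0 \<in> Q" "\<forall>q\<in>Q. \<forall>a\<in>\<Sigma>. \<delta> q a \<in> Q"
    and A: "A = {w \<in> lists \<Sigma>. fold (\<lambda>a q. \<delta> q a) w q0 \<in> F}"
    using assms(1) unfolding regular_over_def by blast
  define state where "state i = fold (\<lambda>a q. \<delta> q a) (p i) q0" for i
  have "range state \<subseteq> Q"
    using fold_transition_closed[OF Q(3,2)] assms(2) unfolding state_def by auto
  then have "\<not> inj state"
    using Q(1) finite_imageD finite_subset infinite_UNIV_nat by blast
  then obtain i1 i2 where "i1 < i2" "state i1 = state i2"
    unfolding inj_def by (metis linorder_neqE_nat)
  moreover have "\<forall>s\<in>lists \<Sigma>. p i1 @ s \<in> A \<longleftrightarrow> p i2 @ s \<in> A"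
    using \<open>state i1 = state i2\<close> assms(2) unfolding A state_def by auto
  ultimately show ?thesis using that by blast
qed

theorem mainTheorem10:
  shows "\<not> Z_recognizable {(x, y, x + y) | x y :: nat. True}"
proof
  assume "Z_recognizable {(x, y, x + y) | x y :: nat. True}"
  moreover have "{rep3 n1 n2 n3 | n1 n2 n3. (n1, n2, n3) \<in> {(x, y, x + y) | x y :: nat. True}}
      = addition_words"
    unfolding addition_words_def by blast
  ultimately have "regular_over Sigma3 addition_words" unfolding Z_recognizable_def by simp
  moreover have "\<forall>i. witness_prefix i \<in> lists Sigma3" using witness_prefix_in_lists by blast
  ultimately obtain i1 i2 where "i1 < i2"
    "\<forall>s\<in>lists Sigma3.
      witness_prefix i1 @ s \<in> addition_words \<longleftrightarrow> witness_prefix i2 @ s \<in> addition_words"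
    by (rule regular_over_indistinguishable_prefixes)
  then show False using witness_prefixes_distinguishable by blast
qed

end
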